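(* Let $K,L>0$ with $K\sqrt L\ge1$, let $A(p,q)=(p^2q)^{1/3}$ and $A^\delta(p,q)=\operatorname{sgn}(q)\min(\lvert A(p,q)\rvert,K\lvert p\rvert,L\lvert q\rvert)$. Then \[ \left\lvert\frac{d}{dp}A^\delta(p,q)\right\rvert\le K,\qquad\left\lvert\frac{d}{dq}A^\delta(p,q)\right\rvert\le L \] wherever the derivatives exist, and $A^\delta$ is Lipschitz continuous. Moreover, \[ \lvert A^\delta(p,q)-A(p,q)\rvert\le\max\left(\frac{4}{27K^2}\lvert q\rvert,\frac{2}{3\sqrt{3L}}\lvert p\rvert\right)\quad\text{for all }p,q\in\mathbb R. \]
   Context: Real cube root; $\operatorname{sgn}(q)=q/\lvert q\rvert$ for $q\neq0$, $\operatorname{sgn}(0)=0$. *)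

theory Defs
  imports "HOL-Analysis.Analysis"
begin

text \<open>A(p,q) = (p^2 q)^(1/3), real cube root (root 3 is odd, so sign-preserving).\<close>
definition A :: "real \<Rightarrow> real \<Rightarrow> real" where
  "A p q = root 3 (p^2 * q)"

definition Adelta :: "real \<Rightarrow> real \<Rightarrow> real \<Rightarrow> real \<Rightarrow> real" where
  "Adelta K L p q = sgn q * min (\<bar>A p q\<bar>) (min (K * \<bar>p\<bar>) (L * \<bar>q\<bar>))"

end

theory Submission
  imports Defs
begin

text \<open>
  In the coordinates \<open>a = |p|^(1/3)\<close>, \<open>b = |q|^(1/3)\<close> one has \<open>|A| = a\<^sup>2 b\<close> and
  \<open>|A\<^sup>\<delta>| = min (a\<^sup>2 b) (K a\<^sup>3) (L b\<^sup>3)\<close>, while \<open>|p|\<close>, \<open>|q|\<close> are \<open>a\<^sup>3\<close>, \<open>b\<^sup>3\<close>.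
  Increasing \<open>a\<close> raises the minimum by at most \<open>K\<close> times the increase of \<open>a\<^sup>3\<close>: this is clear
  if the active term is \<open>K a\<^sup>3\<close> or \<open>L b\<^sup>3\<close>, and if it is \<open>a\<^sup>2 b\<close> then \<open>a\<^sup>2 b \<le> K a\<^sup>3\<close> forces
  \<open>b \<le> K a\<close>, so \<open>a\<^sup>2 b\<close> grows no faster than \<open>K a\<^sup>3\<close>. Symmetrically in \<open>b\<close>, using \<open>a\<^sup>2 \<le> L b\<^sup>2\<close>.
  Hence \<open>A\<^sup>\<delta>\<close> is \<open>K\<close>-Lipschitz in \<open>p\<close> and (being odd in \<open>q\<close> and zero at \<open>q = 0\<close>)
  \<open>L\<close>-Lipschitz in \<open>q\<close>, which bounds the partial derivatives and gives joint Lipschitz continuity.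
  The error \<open>|A| - |A\<^sup>\<delta>|\<close> is \<open>a\<^sup>2 b - K a\<^sup>3\<close> or \<open>a\<^sup>2 b - L b\<^sup>3\<close>, cubics whose maxima in
  \<open>a\<close> resp. \<open>b\<close> are \<open>4 b\<^sup>3 / (27 K\<^sup>2)\<close> and \<open>2 a\<^sup>3 / (3 \<surd>(3 L))\<close>.
\<close>

lemma lipschitz_on_comp_abs:
  fixes g :: "real \<Rightarrow> real"
  assumes "C-lipschitz_on {0..} g"
  shows "C-lipschitz_on UNIV (\<lambda>x. g \<bar>x\<bar>)"
proof -
  have "1-lipschitz_on UNIV (abs :: real \<Rightarrow> real)"
    by (rule lipschitz_onI) (auto simp: dist_real_def)
  moreover have "C-lipschitz_on (abs ` UNIV) g"
    using assms by (rule lipschitz_on_subset) auto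
  ultimately show ?thesis
    using lipschitz_on_compose2 by fastforce
qed

lemma lipschitz_on_sgn_mult_comp_abs:
  fixes g :: "real \<Rightarrow> real"
  assumes "g 0 = 0" and g: "C-lipschitz_on {0..} g"
  shows "C-lipschitz_on UNIV (\<lambda>x. sgn x * g \<bar>x\<bar>)"
proof (rule lipschitz_on_leI)
  have pos: "sgn x * g \<bar>x\<bar> = g x" if "0 \<le> x" for x :: real
    using that \<open>g 0 = 0\<close> by (cases "x = 0") auto
  have neg: "sgn x * g \<bar>x\<bar> = - g (- x)" if "x \<le> 0" for x :: real
    using that \<open>g 0 = 0\<close> by (cases "x = 0") auto
  have bound: "\<bar>g x\<bar> \<le> C * x" if "0 \<le> x" for x
    using lipschitz_onD[OF g, of x 0] that \<open>g 0 = 0\<close> by (simp add: dist_real_def)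
  fix x y :: real assume "x \<le> y"
  consider "0 \<le> x" | "y \<le> 0" | "x < 0" "0 < y" by linarith
  then show "dist (sgn x * g \<bar>x\<bar>) (sgn y * g \<bar>y\<bar>) \<le> C * dist x y"
  proof cases
    case 1
    moreover from 1 \<open>x \<le> y\<close> have "0 \<le> y" by linarith
    ultimately show ?thesis using lipschitz_onD[OF g, of x y] by (simp only: pos) simp
  next
    case 2
    moreover from 2 \<open>x \<le> y\<close> have "x \<le> 0" by linarith
    ultimately show ?thesis using lipschitz_onD[OF g, of "- x" "- y"]
      by (simp only: neg) (simp add: dist_real_def abs_minus_commute)
  next
    case 3
    then have "\<bar>g y + g (- x)\<bar> \<le> C * y + C * (- x)"
      using bound[of y] bound[of "- x"] by linarith
    then show ?thesis using 3 by (simp add: pos neg dist_real_def algebra_simps)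
  qed
qed (rule lipschitz_on_nonneg[OF g])

lemma lipschitz_on_UNIV_of_partial:
  fixes f :: "'a::metric_space \<Rightarrow> 'b::metric_space \<Rightarrow> 'c::metric_space"
  assumes "\<And>y. C-lipschitz_on UNIV (\<lambda>x. f x y)" "\<And>x. D-lipschitz_on UNIV (\<lambda>y. f x y)"
  shows "(C + D)-lipschitz_on UNIV (\<lambda>(x, y). f x y)"
proof (rule lipschitz_onI)
  fix z w :: "'a \<times> 'b"
  obtain x y x' y' where z: "z = (x, y)" and w: "w = (x', y')" by fastforce
  have "dist (f x y) (f x' y') \<le> dist (f x y) (f x' y) + dist (f x' y) (f x' y')"
    by (rule dist_triangle)
  also have "\<dots> \<le> C * dist x x' + D * dist y y'"
    by (intro add_mono lipschitz_onD[OF assms(1)] lipschitz_onD[OF assms(2)]) auto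
  also have "\<dots> \<le> C * dist z w + D * dist z w"
    using dist_fst_le[of z w] dist_snd_le[of z w] lipschitz_on_nonneg[OF assms(1)]
      lipschitz_on_nonneg[OF assms(2)]
    by (intro add_mono mult_left_mono) (auto simp: z w)
  finally show "dist ((\<lambda>(x, y). f x y) z) ((\<lambda>(x, y). f x y) w) \<le> (C + D) * dist z w"
    by (simp add: z w algebra_simps)
next
  show "0 \<le> C + D"
    using lipschitz_on_nonneg[OF assms(1)] lipschitz_on_nonneg[OF assms(2)] by simp
qed

lemma has_real_derivative_abs_le_lipschitz:
  assumes "C-lipschitz_on UNIV f" "(f has_real_derivative D) (at x)"
  shows "\<bar>D\<bar> \<le> C"
proof -
  have "(\<lambda>h. (f (x + h) - f x) / h) \<midarrow>0\<rightarrow> D"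
    using assms(2) by (simp add: DERIV_def)
  then have "((\<lambda>h. \<bar>(f (x + h) - f x) / h\<bar>) \<longlongrightarrow> \<bar>D\<bar>) (at 0)"
    by (rule tendsto_rabs)
  moreover have "\<bar>(f (x + h) - f x) / h\<bar> \<le> C" if "h \<noteq> 0" for h
    using lipschitz_onD[OF assms(1), of "x + h" x] that
    by (simp add: dist_real_def abs_divide divide_le_eq)
  then have "eventually (\<lambda>h. \<bar>(f (x + h) - f x) / h\<bar> \<le> C) (at 0)"
    by (auto simp: eventually_at_filter)
  ultimately show ?thesis
    by (rule tendsto_upperbound) simp
qed

lemma sq_mult_diff_le_cube_diff:
  fixes a a' b K :: real
  assumes "0 \<le> a'" "a' \<le> a" "0 \<le> K" "b \<le> K * a'"
  shows "a^2 * b - a'^2 * b \<le> K * (a^3 - a'^3)"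
proof -
  have "a^2 * b - a'^2 * b = b * ((a - a') * (a + a'))" by (simp add: power2_eq_square algebra_simps)
  also have "\<dots> \<le> K * a' * ((a - a') * (a + a'))"
    using assms by (intro mult_right_mono) auto
  also have "\<dots> = (K * (a - a')) * (a * a' + a'^2)" by (simp add: power2_eq_square algebra_simps)
  also have "\<dots> \<le> (K * (a - a')) * (a^2 + a * a' + a'^2)"
    using assms by (intro mult_left_mono) auto
  also have "\<dots> = K * (a^3 - a'^3)" by (simp add: power2_eq_square power3_eq_cube algebra_simps)
  finally show ?thesis .
qed

lemma sq_mult_diff_le_cube_diff':
  fixes a b b' L :: real
  assumes "0 \<le> b'" "b' \<le> b" "0 \<le> L" "a^2 \<le> L * b'^2"
  shows "a^2 * b - a^2 * b' \<le> L * (b^3 - b'^3)"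
proof -
  have "a^2 * b - a^2 * b' = a^2 * (b - b')" by (simp add: algebra_simps)
  also have "\<dots> \<le> L * b'^2 * (b - b')"
    using assms by (intro mult_right_mono) auto
  also have "\<dots> = (L * (b - b')) * b'^2" by (simp add: algebra_simps)
  also have "\<dots> \<le> (L * (b - b')) * (b^2 + b * b' + b'^2)"
    using assms by (intro mult_left_mono) auto
  also have "\<dots> = L * (b^3 - b'^3)" by (simp add: power2_eq_square power3_eq_cube algebra_simps)
  finally show ?thesis .
qed

lemma sq_mult_sub_cube_le:
  fixes a b K :: real
  assumes "0 \<le> a" "0 \<le> b" "0 < K"
  shows "a^2 * b - K * a^3 \<le> 4 / (27 * K^2) * b^3"
proof -
  have "0 \<le> (3 * K * a - 2 * b)^2 * (3 * K * a + b)"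
    using assms by simp
  then have "27 * K^2 * (a^2 * b - K * a^3) \<le> 4 * b^3"
    by (simp add: power2_eq_square power3_eq_cube algebra_simps)
  then show ?thesis
    using assms by (simp add: field_simps)
qed

lemma sq_mult_sub_cube_le':
  fixes a b L :: real
  assumes "0 \<le> a" "0 \<le> b" "0 < L"
  shows "a^2 * b - L * b^3 \<le> 2 / (3 * sqrt (3 * L)) * a^3"
proof -
  define s where "s = sqrt (3 * L)"
  have "0 < s" "s^2 = 3 * L"
    using assms by (simp_all add: s_def)
  have "0 \<le> (a - s * b)^2 * (2 * a + s * b)"
    using assms \<open>0 < s\<close> by simp
  then have "3 * s * (a^2 * b) - s^2 * s * b^3 \<le> 2 * a^3"
    by (simp add: power2_eq_square power3_eq_cube algebra_simps)
  then have "3 * s * (a^2 * b - L * b^3) \<le> 2 * a^3"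
    by (simp add: \<open>s^2 = 3 * L\<close> algebra_simps)
  then have "a^2 * b - L * b^3 \<le> 2 / (3 * s) * a^3"
    using \<open>0 < s\<close> by (simp add: field_simps)
  then show ?thesis by (simp add: s_def)
qed

definition Adelta_cubic :: "real \<Rightarrow> real \<Rightarrow> real \<Rightarrow> real \<Rightarrow> real" where
  "Adelta_cubic K L a b = min (a^2 * b) (min (K * a^3) (L * b^3))"

lemma A_eq_sgn_mult_root: "A p q = sgn q * ((root 3 \<bar>p\<bar>)^2 * root 3 \<bar>q\<bar>)"
proof -
  have "A p q = (root 3 \<bar>p\<bar>)^2 * root 3 q"
    by (simp add: A_def real_root_mult real_root_power real_root_abs)
  also have "root 3 q = sgn q * root 3 \<bar>q\<bar>"
    by (simp add: real_root_abs sgn_real_def real_root_minus abs_if)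
  finally show ?thesis by simp
qed

lemma Adelta_eq_Adelta_cubic:
  "Adelta K L p q = sgn q * Adelta_cubic K L (root 3 \<bar>p\<bar>) (root 3 \<bar>q\<bar>)"
proof -
  have "\<bar>A p q\<bar> = (root 3 \<bar>p\<bar>)^2 * root 3 \<bar>q\<bar>" if "q \<noteq> 0"
    using that by (simp add: A_eq_sgn_mult_root abs_mult)
  moreover have "\<bar>p\<bar> = (root 3 \<bar>p\<bar>)^3" "\<bar>q\<bar> = (root 3 \<bar>q\<bar>)^3" by simp_all
  ultimately show ?thesis
    by (cases "q = 0") (simp_all add: Adelta_def Adelta_cubic_def)
qed

lemma Adelta_cubic_cases:
  assumes "0 \<le> a" "0 \<le> b"
  obtains "Adelta_cubic K L a b = a^2 * b" "b \<le> K * a" "a^2 \<le> L * b^2"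
    | "Adelta_cubic K L a b = K * a^3"
    | "Adelta_cubic K L a b = L * b^3"
proof -
  have "Adelta_cubic K L a b = a^2 * b \<and> a^2 * b \<le> K * a^3 \<and> a^2 * b \<le> L * b^3
      \<or> Adelta_cubic K L a b = K * a^3 \<or> Adelta_cubic K L a b = L * b^3"
    unfolding Adelta_cubic_def by (auto simp: min_def)
  then consider "Adelta_cubic K L a b = a^2 * b" "a^2 * b \<le> K * a^3" "a^2 * b \<le> L * b^3"
    | "Adelta_cubic K L a b = K * a^3" | "Adelta_cubic K L a b = L * b^3"
    by blast
  then show thesis
  proof cases
    case 1
    show thesis
    proof (cases "a = 0 \<or> b = 0")
      case True
      then show thesis using 1 that(2,3) by auto
    next
      case False
      then have "0 < a" "0 < b" using assms by auto
      then have "b \<le> K * a" "a^2 \<le> L * b^2"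
        using 1(2,3) by (simp_all add: power2_eq_square power3_eq_cube mult.assoc
            mult.left_commute[of K] mult.left_commute[of L])
      then show thesis using 1(1) that(1) by blast
    qed
  qed (use that in blast)+
qed

lemma Adelta_cubic_mono:
  assumes "0 \<le> a'" "a' \<le> a" "0 \<le> b'" "b' \<le> b" "0 \<le> K" "0 \<le> L"
  shows "Adelta_cubic K L a' b' \<le> Adelta_cubic K L a b"
  unfolding Adelta_cubic_def using assms
  by (intro min.mono mult_mono power_mono mult_left_mono) (auto simp: zero_le_mult_iff)

lemma Adelta_cubic_increment_left:
  assumes "0 \<le> a'" "a' \<le> a" "0 \<le> b" "0 \<le> K"
  shows "Adelta_cubic K L a b - Adelta_cubic K L a' b \<le> K * (a^3 - a'^3)"
proof -
  have "a'^3 \<le> a^3" using assms by (intro power_mono) auto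
  then have "0 \<le> K * (a^3 - a'^3)" using assms by simp
  moreover have "Adelta_cubic K L a b \<le> a^2 * b" "Adelta_cubic K L a b \<le> K * a^3"
    "Adelta_cubic K L a b \<le> L * b^3" by (simp_all add: Adelta_cubic_def)
  moreover note sq_mult_diff_le_cube_diff[where b = b, OF assms(1,2,4)]
  ultimately show ?thesis
    by (cases rule: Adelta_cubic_cases[OF assms(1,3), of K L]) (auto simp: algebra_simps)
qed

lemma Adelta_cubic_increment_right:
  assumes "0 \<le> b'" "b' \<le> b" "0 \<le> a" "0 \<le> L"
  shows "Adelta_cubic K L a b - Adelta_cubic K L a b' \<le> L * (b^3 - b'^3)"
proof -
  have "b'^3 \<le> b^3" using assms by (intro power_mono) auto
  then have "0 \<le> L * (b^3 - b'^3)" using assms by simp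
  moreover have "Adelta_cubic K L a b \<le> a^2 * b" "Adelta_cubic K L a b \<le> K * a^3"
    "Adelta_cubic K L a b \<le> L * b^3" by (simp_all add: Adelta_cubic_def)
  moreover note sq_mult_diff_le_cube_diff'[where a = a, OF assms(1,2,4)]
  ultimately show ?thesis
    by (cases rule: Adelta_cubic_cases[OF assms(3,1), of K L]) (auto simp: algebra_simps)
qed

lemma Adelta_cubic_lipschitz_left:
  assumes "0 \<le> b" "0 \<le> K" "0 \<le> L"
  shows "K-lipschitz_on {0..} (\<lambda>x. Adelta_cubic K L (root 3 x) b)"
proof (rule lipschitz_on_leI)
  fix x y :: real assume "x \<in> {0..}" "y \<in> {0..}" "x \<le> y"
  then have "0 \<le> root 3 x" "root 3 x \<le> root 3 y" and cubes: "(root 3 x)^3 = x" "(root 3 y)^3 = y"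
    by auto
  with assms have "Adelta_cubic K L (root 3 x) b \<le> Adelta_cubic K L (root 3 y) b"
    "Adelta_cubic K L (root 3 y) b - Adelta_cubic K L (root 3 x) b \<le> K * ((root 3 y)^3 - (root 3 x)^3)"
    by (intro Adelta_cubic_mono Adelta_cubic_increment_left; simp)+
  then show "dist (Adelta_cubic K L (root 3 x) b) (Adelta_cubic K L (root 3 y) b) \<le> K * dist x y"
    using \<open>x \<le> y\<close> by (simp add: dist_real_def cubes)
qed fact

lemma Adelta_cubic_lipschitz_right:
  assumes "0 \<le> a" "0 \<le> K" "0 \<le> L"
  shows "L-lipschitz_on {0..} (\<lambda>y. Adelta_cubic K L a (root 3 y))"
proof (rule lipschitz_on_leI)
  fix x y :: real assume "x \<in> {0..}" "y \<in> {0..}" "x \<le> y"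
  then have "0 \<le> root 3 x" "root 3 x \<le> root 3 y" and cubes: "(root 3 x)^3 = x" "(root 3 y)^3 = y"
    by auto
  with assms have "Adelta_cubic K L a (root 3 x) \<le> Adelta_cubic K L a (root 3 y)"
    "Adelta_cubic K L a (root 3 y) - Adelta_cubic K L a (root 3 x) \<le> L * ((root 3 y)^3 - (root 3 x)^3)"
    by (intro Adelta_cubic_mono Adelta_cubic_increment_right; simp)+
  then show "dist (Adelta_cubic K L a (root 3 x)) (Adelta_cubic K L a (root 3 y)) \<le> L * dist x y"
    using \<open>x \<le> y\<close> by (simp add: dist_real_def cubes)
qed fact

lemma Adelta_lipschitz_left:
  assumes "0 \<le> K" "0 \<le> L"
  shows "K-lipschitz_on UNIV (\<lambda>p. Adelta K L p q)"
proof -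
  have "K-lipschitz_on UNIV (\<lambda>p. Adelta_cubic K L (root 3 \<bar>p\<bar>) (root 3 \<bar>q\<bar>))"
    using assms by (intro lipschitz_on_comp_abs Adelta_cubic_lipschitz_left) auto
  then have "(1 * K)-lipschitz_on UNIV (\<lambda>p. sgn q * Adelta_cubic K L (root 3 \<bar>p\<bar>) (root 3 \<bar>q\<bar>))"
    by (rule lipschitz_on_cmult_real_upper) (simp add: abs_sgn)
  then show ?thesis by (simp add: Adelta_eq_Adelta_cubic)
qed

lemma Adelta_lipschitz_right:
  assumes "0 \<le> K" "0 \<le> L"
  shows "L-lipschitz_on UNIV (\<lambda>q. Adelta K L p q)"
proof -
  have "Adelta_cubic K L (root 3 \<bar>p\<bar>) (root 3 0) = 0"
    using assms by (simp add: Adelta_cubic_def min_def)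
  then have "L-lipschitz_on UNIV (\<lambda>q. sgn q * Adelta_cubic K L (root 3 \<bar>p\<bar>) (root 3 \<bar>q\<bar>))"
    using assms by (intro lipschitz_on_sgn_mult_comp_abs Adelta_cubic_lipschitz_right) auto
  then show ?thesis by (simp add: Adelta_eq_Adelta_cubic)
qed

lemma Adelta_cubic_approx:
  assumes "0 \<le> a" "0 \<le> b" "0 < K" "0 < L"
  shows "a^2 * b - Adelta_cubic K L a b \<le> max (4 / (27 * K^2) * b^3) (2 / (3 * sqrt (3 * L)) * a^3)"
proof -
  have "0 \<le> 4 / (27 * K^2) * b^3" using assms by simp
  with sq_mult_sub_cube_le[OF assms(1,2,3)] sq_mult_sub_cube_le'[OF assms(1,2,4)] show ?thesis
    by (cases rule: Adelta_cubic_cases[OF assms(1,2), of K L]) auto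
qed

lemma abs_Adelta_sub_A:
  assumes "0 \<le> K" "0 \<le> L"
  shows "\<bar>Adelta K L p q - A p q\<bar>
    = (root 3 \<bar>p\<bar>)^2 * root 3 \<bar>q\<bar> - Adelta_cubic K L (root 3 \<bar>p\<bar>) (root 3 \<bar>q\<bar>)"
proof (cases "q = 0")
  case True
  then show ?thesis using assms by (simp add: Adelta_def A_def Adelta_cubic_def min_def)
next
  case False
  have "Adelta_cubic K L (root 3 \<bar>p\<bar>) (root 3 \<bar>q\<bar>) \<le> (root 3 \<bar>p\<bar>)^2 * root 3 \<bar>q\<bar>"
    by (simp add: Adelta_cubic_def)
  then show ?thesis
    using False by (simp add: Adelta_eq_Adelta_cubic A_eq_sgn_mult_root abs_mult
        right_diff_distrib[symmetric])
qed

lemma Adelta_approx_A: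
  assumes "0 < K" "0 < L"
  shows "\<bar>Adelta K L p q - A p q\<bar> \<le> max (4 / (27 * K^2) * \<bar>q\<bar>) (2 / (3 * sqrt (3 * L)) * \<bar>p\<bar>)"
  using Adelta_cubic_approx[of "root 3 \<bar>p\<bar>" "root 3 \<bar>q\<bar>" K L] assms
  by (simp add: abs_Adelta_sub_A)

theorem mainTheorem9:
  fixes K L :: real
  assumes "K > 0" and "L > 0" and "K * sqrt L \<ge> 1"
  shows "(\<forall>p q D. ((\<lambda>x. Adelta K L x q) has_real_derivative D) (at p) \<longrightarrow> \<bar>D\<bar> \<le> K)
       \<and> (\<forall>p q D. ((\<lambda>y. Adelta K L p y) has_real_derivative D) (at q) \<longrightarrow> \<bar>D\<bar> \<le> L)
       \<and> (\<exists>C. C-lipschitz_on UNIV (\<lambda>(p, q). Adelta K L p q))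
       \<and> (\<forall>p q. \<bar>Adelta K L p q - A p q\<bar>
                  \<le> max (4 / (27 * K^2) * \<bar>q\<bar>) (2 / (3 * sqrt (3 * L)) * \<bar>p\<bar>))"
proof -
  have lip_p: "\<And>q. K-lipschitz_on UNIV (\<lambda>p. Adelta K L p q)"
    and lip_q: "\<And>p. L-lipschitz_on UNIV (\<lambda>q. Adelta K L p q)"
    using assms(1,2) by (simp_all add: Adelta_lipschitz_left Adelta_lipschitz_right)
  show ?thesis
    using has_real_derivative_abs_le_lipschitz[OF lip_p] has_real_derivative_abs_le_lipschitz[OF lip_q]
      lipschitz_on_UNIV_of_partial[OF lip_p lip_q] Adelta_approx_A[OF assms(1,2)]
    by blast
qed

end
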